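(* Let $n \geq 2$, $m$, $\delta$ be integers with $\delta \geq n$ and $m \leq 2\delta-1$. Let $G$ be a bipartite graph with bipartition $(X,Y)$, where $|X| = n$, $|Y| = m$, and every $x \in X$ has degree at least $\delta$. If $G$ does not contain a cycle of length $2n$, then either $G$ is isomorphic to $G_1(n)$, or $G$ is isomorphic to $G_2(a,b)$ for some positive integers $a \geq b$ with $a+b=n$ (where $G_1(n)$ and $G_2(a,b)$ are the graphs defined in the context, with parameter $\delta$).
   Context: $G_1(n)$ (defined when $\delta = n$): take a copy of the complete bipartite graph $K_{\delta,\delta-1}$ with parts $X$ of size $\delta$ and $Y_0$ of size $\delta-1$, and for every vertex of $X$ add a new private neighbor of degree 1; the resulting graph has parts $X$ (size $n=\delta$) and $Y$ of size $2\delta-1$. $G_2(a,b)$ (for positive integers $a\ge b$ with $a+b=n$): take a copy $H_1$ of $K_{a,\delta}$ and a copy $H_2$ of $K_{b,\delta}$ and identify one vertex of $H_1$ in its part of size $\delta$ with one vertex of $H_2$ in its part of size $\delta$; here $X$ is the union of the parts of sizes $a$ and $b$ (so $|X|=n$) and $Y$ has size $2\delta-1$. *)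

theory Defs
  imports Main
begin

definition bipartite_graph :: "'a set \<Rightarrow> 'a set \<Rightarrow> 'a set set \<Rightarrow> bool" where
  "bipartite_graph X Y E \<longleftrightarrow> finite X \<and> finite Y \<and> X \<inter> Y = {} \<and>
     (\<forall>e\<in>E. \<exists>x\<in>X. \<exists>y\<in>Y. e = {x, y})"

definition degree :: "'a set set \<Rightarrow> 'a \<Rightarrow> nat" where
  "degree E v = card {u. {v, u} \<in> E}"

definition has_cycle_of_length :: "'a set \<Rightarrow> 'a set set \<Rightarrow> nat \<Rightarrow> bool" where
  "has_cycle_of_length V E k \<longleftrightarrow> k \<ge> 3 \<and> (\<exists>vs. length vs = k \<and> distinct vs \<and> set vs \<subseteq> V \<and>
     (\<forall>i<k. {vs ! i, vs ! ((i + 1) mod k)} \<in> E))"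

definition graph_iso :: "'a set \<Rightarrow> 'a set set \<Rightarrow> 'b set \<Rightarrow> 'b set set \<Rightarrow> bool" where
  "graph_iso V E V' E' \<longleftrightarrow> (\<exists>f. bij_betw f V V' \<and>
     (\<forall>u\<in>V. \<forall>v\<in>V. {u, v} \<in> E \<longleftrightarrow> {f u, f v} \<in> E'))"

text \<open>G_1 with parameter d (= delta): X = {(0,i) | i<d}, Y_0 = {(1,j) | j<d-1},
  private pendant neighbours (2,i) of (0,i).\<close>
definition G1_X :: "nat \<Rightarrow> (nat \<times> nat) set" where
  "G1_X d = {(0, i) | i. i < d}"
definition G1_Y :: "nat \<Rightarrow> (nat \<times> nat) set" where
  "G1_Y d = {(1, j) | j. j < d - 1} \<union> {(2, i) | i. i < d}"
definition G1_E :: "nat \<Rightarrow> (nat \<times> nat) set set" where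
  "G1_E d = {{(0, i), (1, j)} | i j. i < d \<and> j < d - 1} \<union> {{(0, i), (2, i)} | i. i < d}"

text \<open>G_2(a,b) with parameter d: H_1 = K_{a,d} with parts {(0,i) | i<a} and {(1,j) | j<d};
  H_2 = K_{b,d} with parts {(2,i) | i<b} and {(1,0)} \<union> {(3,j) | 1 \<le> j < d}, so (1,0) is the
  identified vertex.\<close>
definition G2_X :: "nat \<Rightarrow> nat \<Rightarrow> (nat \<times> nat) set" where
  "G2_X a b = {(0, i) | i. i < a} \<union> {(2, i) | i. i < b}"
definition G2_Y :: "nat \<Rightarrow> (nat \<times> nat) set" where
  "G2_Y d = {(1, j) | j. j < d} \<union> {(3, j) | j. 1 \<le> j \<and> j < d}"
definition G2_E :: "nat \<Rightarrow> nat \<Rightarrow> nat \<Rightarrow> (nat \<times> nat) set set" where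
  "G2_E a b d = {{(0, i), (1, j)} | i j. i < a \<and> j < d}
     \<union> {{(2, i), (1, 0)} | i. i < b}
     \<union> {{(2, i), (3, j)} | i j. i < b \<and> 1 \<le> j \<and> j < d}"

end

theory Submission
  imports Defs
begin

text \<open>
  Write \<open>N v\<close> for the neighbourhood of \<open>v\<close>. As \<open>|Y| < 2\<delta>\<close>, any two vertices of \<open>X\<close> have a
  common neighbour. Adding the vertices of \<open>X\<close> one at a time, we show that every \<open>X' \<subseteq> X\<close> with
  \<open>2 \<le> |X'|\<close> lies on a cycle of length \<open>2|X'|\<close> (a spanning cycle), or has the shape of \<open>G\<^sub>2\<close>,
  or has the shape of \<open>G\<^sub>1\<close> and \<open>|X'| = \<delta>\<close>.

  To add \<open>x\<close> to a set of shape \<open>G\<^sub>2\<close>: either \<open>N x\<close> is the neighbourhood of one of the two sides,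
  or \<open>x\<close> closes a spanning cycle through both sides. Otherwise choose a spanning cycle of \<open>X'\<close>
  whose connecting vertices contain as few neighbours of \<open>x\<close> as possible, and assume that \<open>x\<close>
  cannot be spliced into any spanning cycle. If \<open>N x\<close> avoids the cycle, consecutive vertices of
  the cycle must share their unique common neighbour with \<open>x\<close>, which forces the shape of \<open>G\<^sub>2\<close>.
  If \<open>N x\<close> meets the cycle, counting neighbours off the cycle forces \<open>\<delta> = |X'| + 1\<close> and the
  shape of \<open>G\<^sub>1\<close>. For \<open>X' = X\<close> a spanning cycle has length \<open>2n\<close>, which is excluded.
\<close>

lemma last_rotate_Suc:
  assumes "i < length xs" shows "last (rotate (Suc i) xs) = xs ! i"
proof (cases "Suc i = length xs")
  case True
  then have "rotate (Suc i) xs = xs" by (metis mod_self rotate_id)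
  moreover have "xs \<noteq> []" using assms by auto
  ultimately show ?thesis using True by (metis diff_Suc_1 last_conv_nth)
next
  case False
  then have "rotate (Suc i) xs = drop (Suc i) xs @ take (Suc i) xs"
    using assms by (metis Suc_lessI mod_less rotate_drop_take)
  then show ?thesis using assms by (simp add: take_Suc_conv_app_nth del: rotate_Suc)
qed

lemma obtain_distinct_list_subset:
  assumes "n \<le> card S"
  obtains xs where "distinct xs" "set xs \<subseteq> S" "length xs = n"
proof -
  obtain T where T: "T \<subseteq> S" "card T = n" "finite T" by (rule obtain_subset_with_card_n[OF assms])
  obtain xs where xs: "set xs = T" "distinct xs" using finite_distinct_list[OF T(3)] by blast
  then have "length xs = n" using T(2) distinct_card by fastforce
  then show thesis using that xs T(1) by blast
qed

section \<open>Alternating paths and cycles\<close>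

text \<open>\<open>alt_path N xs ys\<close> encodes the walk \<open>x\<^sub>0 y\<^sub>0 x\<^sub>1 y\<^sub>1 \<dots> y\<^sub>l\<^sub>-\<^sub>1 x\<^sub>l\<close> alternating between
  \<open>xs\<close> and the connectors \<open>ys\<close>; in \<open>alt_cycle N xs zs\<close> the connector \<open>zs ! i\<close> joins \<open>xs ! i\<close> to
  its cyclic successor.\<close>

definition alt_path :: "('a \<Rightarrow> 'a set) \<Rightarrow> 'a list \<Rightarrow> 'a list \<Rightarrow> bool" where
  "alt_path N xs ys \<longleftrightarrow> length xs = Suc (length ys) \<and>
     (\<forall>i<length ys. ys ! i \<in> N (xs ! i) \<and> ys ! i \<in> N (xs ! Suc i))"

definition alt_cycle :: "('a \<Rightarrow> 'a set) \<Rightarrow> 'a list \<Rightarrow> 'a list \<Rightarrow> bool" where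
  "alt_cycle N xs zs \<longleftrightarrow> length zs = length xs \<and> 2 \<le> length xs \<and>
     (\<forall>i<length xs. zs ! i \<in> N (xs ! i) \<and> zs ! i \<in> N (xs ! (Suc i mod length xs)))"

lemma alt_pathI:
  assumes "length xs = Suc (length ys)"
    and "\<And>i. i < length ys \<Longrightarrow> ys ! i \<in> N (xs ! i)"
    and "\<And>i. i < length ys \<Longrightarrow> ys ! i \<in> N (xs ! Suc i)"
  shows "alt_path N xs ys"
  using assms by (simp add: alt_path_def)

lemma alt_path_singleton [simp]: "alt_path N [a] []"
  by (simp add: alt_path_def)

lemma alt_path_Cons_Cons:
  "alt_path N (a # b # xs) (y # ys) \<longleftrightarrow> y \<in> N a \<and> y \<in> N b \<and> alt_path N (b # xs) ys"
  by (auto simp: alt_path_def nth_Cons split: nat.splits)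

lemma alt_path_not_Nil: "alt_path N xs ys \<Longrightarrow> xs \<noteq> []"
  by (auto simp: alt_path_def)

lemma alt_path_common_neighbours:
  assumes "length xs = Suc (length ys)" and "\<forall>v\<in>set xs. set ys \<subseteq> N v"
  shows "alt_path N xs ys"
proof (rule alt_pathI)
  fix i assume "i < length ys"
  then have "xs ! i \<in> set xs" "xs ! Suc i \<in> set xs" "ys ! i \<in> set ys" using assms(1) by auto
  then show "ys ! i \<in> N (xs ! i)" "ys ! i \<in> N (xs ! Suc i)" using assms(2) by blast+
qed (rule assms(1))

lemma alt_path_append:
  assumes "alt_path N xs1 ys1" "alt_path N xs2 ys2" "y \<in> N (last xs1)" "y \<in> N (hd xs2)"
  shows "alt_path N (xs1 @ xs2) (ys1 @ y # ys2)"
proof -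
  have l1: "length xs1 = Suc (length ys1)" and l2: "length xs2 = Suc (length ys2)"
    using assms(1,2) by (auto simp: alt_path_def)
  then have ends: "last xs1 = xs1 ! length ys1" "hd xs2 = xs2 ! 0"
    by (metis diff_Suc_1 last_conv_nth list.size(3) nat.distinct(1))
      (metis hd_conv_nth l2 list.size(3) nat.distinct(1))
  then have "(ys1 @ y # ys2) ! i \<in> N ((xs1 @ xs2) ! i) \<and>
      (ys1 @ y # ys2) ! i \<in> N ((xs1 @ xs2) ! Suc i)" if "i < length (ys1 @ y # ys2)" for i
  proof -
    consider "i < length ys1" | "i = length ys1" | "length ys1 < i" by linarith
    then show ?thesis
    proof cases
      case 3
      then obtain t where "i = Suc (length ys1 + t)" by (auto simp: less_iff_Suc_add)
      then show ?thesis using assms(2) l1 that by (auto simp: alt_path_def nth_append)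
    qed (use assms l1 ends in \<open>auto simp: alt_path_def nth_append\<close>)
  qed
  then show ?thesis using l1 l2 by (simp add: alt_path_def)
qed

lemma alt_path_rev:
  assumes "alt_path N xs ys" shows "alt_path N (rev xs) (rev ys)"
proof -
  have "rev ys ! i \<in> N (rev xs ! i) \<and> rev ys ! i \<in> N (rev xs ! Suc i)" if "i < length ys" for i
  proof -
    define j where "j = length ys - Suc i"
    have "rev ys ! i = ys ! j" "rev xs ! i = xs ! Suc j" "rev xs ! Suc i = xs ! j"
      using that assms by (auto simp: alt_path_def rev_nth j_def Suc_diff_Suc)
    moreover have "j < length ys" using that by (simp add: j_def)
    ultimately show ?thesis using assms by (simp add: alt_path_def)
  qed
  then show ?thesis using assms by (simp add: alt_path_def)
qed

lemma alt_path_split: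
  assumes "alt_path N xs ys" "t < length ys"
  shows "alt_path N (take (Suc t) xs) (take t ys)" "alt_path N (drop (Suc t) xs) (drop (Suc t) ys)"
    "last (take (Suc t) xs) = xs ! t" "hd (drop (Suc t) xs) = xs ! Suc t"
proof -
  show "alt_path N (take (Suc t) xs) (take t ys)" "alt_path N (drop (Suc t) xs) (drop (Suc t) ys)"
    using assms by (auto simp: alt_path_def)
  show "last (take (Suc t) xs) = xs ! t" "hd (drop (Suc t) xs) = xs ! Suc t"
    using assms by (simp_all add: alt_path_def take_Suc_conv_app_nth hd_drop_conv_nth)
qed

lemma alt_cycle_close:
  assumes "alt_path N xs ys" "z \<in> N (last xs)" "z \<in> N (hd xs)" "2 \<le> length xs"
  shows "alt_cycle N xs (ys @ [z])"
proof -
  have l: "length xs = Suc (length ys)" using assms by (simp add: alt_path_def)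
  have "xs \<noteq> []" using l by auto
  then have "last xs = xs ! length ys" "hd xs = xs ! 0" by (simp_all add: l last_conv_nth hd_conv_nth)
  then have "(ys @ [z]) ! i \<in> N (xs ! i) \<and> (ys @ [z]) ! i \<in> N (xs ! (Suc i mod length xs))"
    if "i < length xs" for i
  proof (cases "i < length ys")
    case False
    then have "i = length ys" using that l by simp
    then show ?thesis using assms \<open>last xs = _\<close> \<open>hd xs = _\<close> l by (simp add: nth_append)
  qed (use assms l in \<open>auto simp: alt_path_def nth_append\<close>)
  then show ?thesis using l assms(4) unfolding alt_cycle_def by simp
qed

lemma alt_cycle_open_last:
  assumes "alt_cycle N xs zs"
  shows "alt_path N xs (butlast zs)"
proof -
  have "zs ! i \<in> N (xs ! i) \<and> zs ! i \<in> N (xs ! Suc i)" if "Suc i < length xs" for i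
    using assms[unfolded alt_cycle_def] that by (metis Suc_lessD mod_less)
  then show ?thesis using assms by (auto simp: alt_cycle_def alt_path_def nth_butlast)
qed

lemma alt_cycle_rotate:
  assumes "alt_cycle N xs zs" shows "alt_cycle N (rotate r xs) (rotate r zs)"
proof -
  let ?k = "length xs"
  have l: "length zs = ?k" "0 < ?k" using assms by (auto simp: alt_cycle_def)
  have "(r + Suc i mod ?k) mod ?k = Suc ((r + i) mod ?k) mod ?k" for i
    by (metis add_Suc_right mod_Suc_eq mod_add_right_eq)
  then have "rotate r zs ! i \<in> N (rotate r xs ! i) \<and>
      rotate r zs ! i \<in> N (rotate r xs ! (Suc i mod ?k))" if "i < ?k" for i
    using assms that l by (simp add: alt_cycle_def nth_rotate del: rotate_Suc)
  then show ?thesis using assms by (simp add: alt_cycle_def)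
qed

lemma alt_cycle_update:
  assumes "alt_cycle N xs zs" "r \<in> N (xs ! i)" "r \<in> N (xs ! (Suc i mod length xs))"
  shows "alt_cycle N xs (zs[i := r])"
proof -
  have "zs[i := r] ! t \<in> N (xs ! t) \<and> zs[i := r] ! t \<in> N (xs ! (Suc t mod length xs))"
    if "t < length xs" for t
    using assms that by (cases "t = i") (auto simp: alt_cycle_def)
  then show ?thesis using assms(1) by (simp add: alt_cycle_def)
qed

lemma alt_cycle_open:
  assumes "alt_cycle N xs zs" "distinct zs" "i < length xs"
  defines "xs' \<equiv> rotate (Suc i) xs" and "ys' \<equiv> butlast (rotate (Suc i) zs)"
  shows "alt_path N xs' ys'" "hd xs' = xs ! (Suc i mod length xs)" "last xs' = xs ! i"
    "set ys' = set zs - {zs ! i}" "distinct ys'"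
proof -
  have l: "length zs = length xs" using assms by (simp add: alt_cycle_def)
  show "alt_path N xs' ys'"
    unfolding xs'_def ys'_def by (rule alt_cycle_open_last[OF alt_cycle_rotate[OF assms(1)]])
  have ne: "xs \<noteq> []" "rotate (Suc i) zs \<noteq> []" using assms(3) l by auto
  show "hd xs' = xs ! (Suc i mod length xs)" "last xs' = xs ! i"
    unfolding xs'_def using hd_rotate_conv_nth[OF ne(1)] last_rotate_Suc[OF assms(3)] by (simp_all del: rotate_Suc)
  have "last (rotate (Suc i) zs) = zs ! i" using assms(3) l by (simp add: last_rotate_Suc del: rotate_Suc)
  then have "rotate (Suc i) zs = ys' @ [zs ! i]"
    unfolding ys'_def using ne(2) by (metis append_butlast_last_id)
  then have "distinct (ys' @ [zs ! i])" "set (ys' @ [zs ! i]) = set zs"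
    using assms(2) by (metis distinct_rotate, metis set_rotate)
  then show "set ys' = set zs - {zs ! i}" "distinct ys'" by auto
qed

lemma alt_cycle_split:
  assumes c: "alt_cycle N xs zs" "distinct xs" "distinct zs"
    and ij: "i < length xs" "j < length xs" "i \<noteq> j"
  obtains P1 Y1 P2 Y2 where "alt_path N P1 Y1" "alt_path N P2 Y2"
    "hd P1 = xs ! (Suc i mod length xs)" "last P1 = xs ! j"
    "hd P2 = xs ! (Suc j mod length xs)" "last P2 = xs ! i"
    "distinct (P1 @ P2)" "set (P1 @ P2) = set xs"
    "distinct (Y1 @ Y2)" "set (Y1 @ Y2) = set zs - {zs ! i, zs ! j}"
proof -
  let ?k = "length xs"
  define xs' where "xs' = rotate (Suc i) xs"
  define ys' where "ys' = butlast (rotate (Suc i) zs)"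
  note opened = alt_cycle_open[OF c(1,3) ij(1), folded xs'_def ys'_def]
  have l: "length zs = ?k" "length xs' = ?k" "length ys' = ?k - 1"
    using c(1) by (simp_all add: alt_cycle_def xs'_def ys'_def)
  have "zs ! j \<in> set ys'" using opened(4) ij l c(3) by (auto simp: nth_eq_iff_index_eq)
  then obtain t where t: "t < length ys'" "ys' ! t = zs ! j" by (auto simp: in_set_conv_nth)
  have "ys' ! t = zs ! ((Suc i + t) mod ?k)"
    using t l by (simp add: ys'_def nth_butlast nth_rotate del: rotate_Suc)
  then have tj: "(Suc i + t) mod ?k = j"
    using t c(3) l ij by (metis mod_less_divisor nth_eq_iff_index_eq zero_less_iff_neq_zero
        not_less_zero)
  have "Suc t < ?k" using t l by simp
  moreover have "Suc (Suc i + t) mod ?k = Suc j mod ?k" using tj by (metis mod_Suc_eq)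
  ultimately have at_t: "xs' ! t = xs ! j" "xs' ! Suc t = xs ! (Suc j mod ?k)"
    using tj by (simp_all add: xs'_def nth_rotate del: rotate_Suc)
  define P1 Y1 P2 Y2 where "P1 = take (Suc t) xs'" and "Y1 = take t ys'"
    and "P2 = drop (Suc t) xs'" and "Y2 = drop (Suc t) ys'"
  note parts = alt_path_split[OF opened(1) t(1), folded P1_def Y1_def P2_def Y2_def]
  have P: "P1 @ P2 = xs'" by (simp add: P1_def P2_def)
  have Y: "ys' = Y1 @ zs ! j # Y2"
    unfolding Y1_def Y2_def t(2)[symmetric] using t(1) by (rule id_take_nth_drop)
  show thesis
  proof (rule that[OF parts(1,2)])
    show "hd P1 = xs ! (Suc i mod ?k)" using opened(2) by (simp add: P1_def)
    show "last P1 = xs ! j" "hd P2 = xs ! (Suc j mod ?k)" using parts(3,4) at_t by simp_all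
    show "last P2 = xs ! i" using opened(3) \<open>Suc t < ?k\<close> l by (simp add: P2_def)
    show "distinct (P1 @ P2)" "set (P1 @ P2) = set xs" using c(2) by (simp_all add: P xs'_def)
    show "distinct (Y1 @ Y2)" "set (Y1 @ Y2) = set zs - {zs ! i, zs ! j}"
      using opened(4,5) unfolding Y by auto
  qed
qed

section \<open>Spanning cycles and the shapes of \<open>G\<^sub>1\<close> and \<open>G\<^sub>2\<close>\<close>

locale neighbourhood_system =
  fixes N :: "'a \<Rightarrow> 'a set" and Y :: "'a set" and \<delta> :: nat
begin

definition spanning_cycle :: "'a set \<Rightarrow> bool" where
  "spanning_cycle X \<longleftrightarrow>
     (\<exists>xs zs. alt_cycle N xs zs \<and> distinct xs \<and> set xs = X \<and> distinct zs \<and> set zs \<subseteq> Y)"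

text \<open>The shape of \<open>G\<^sub>2(|A|, |B|)\<close>, with \<open>y\<^sub>0\<close> the identified vertex, and of \<open>G\<^sub>1(|X|)\<close>,
  with \<open>Y\<^sub>0\<close> the common neighbourhood.\<close>

definition G2_structure :: "'a set \<Rightarrow> bool" where
  "G2_structure X \<longleftrightarrow> (\<exists>A B y\<^sub>0 P Q. X = A \<union> B \<and> A \<inter> B = {} \<and> A \<noteq> {} \<and> B \<noteq> {} \<and>
     Y = insert y\<^sub>0 (P \<union> Q) \<and> y\<^sub>0 \<notin> P \<and> y\<^sub>0 \<notin> Q \<and> P \<inter> Q = {} \<and>
     card P = \<delta> - 1 \<and> card Q = \<delta> - 1 \<and> (\<forall>a\<in>A. N a = insert y\<^sub>0 P) \<and> (\<forall>b\<in>B. N b = insert y\<^sub>0 Q))"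

definition G1_structure :: "'a set \<Rightarrow> bool" where
  "G1_structure X \<longleftrightarrow> (\<exists>Y\<^sub>0. Y\<^sub>0 \<subseteq> Y \<and> card Y\<^sub>0 = \<delta> - 1 \<and>
     (\<forall>v\<in>X. Y\<^sub>0 \<subseteq> N v \<and> card (N v - Y\<^sub>0) = 1) \<and>
     (\<forall>v\<in>X. \<forall>w\<in>X. v \<noteq> w \<longrightarrow> (N v - Y\<^sub>0) \<inter> (N w - Y\<^sub>0) = {}) \<and> Y = Y\<^sub>0 \<union> (\<Union>v\<in>X. N v))"

lemma G2_structureI:
  assumes "X = A \<union> B" "A \<inter> B = {}" "A \<noteq> {}" "B \<noteq> {}"
    and "Y = insert y\<^sub>0 (P \<union> Q)" "y\<^sub>0 \<notin> P" "y\<^sub>0 \<notin> Q" "P \<inter> Q = {}"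
    and "card P = \<delta> - 1" "card Q = \<delta> - 1" "\<forall>a\<in>A. N a = insert y\<^sub>0 P" "\<forall>b\<in>B. N b = insert y\<^sub>0 Q"
  shows "G2_structure X"
  unfolding G2_structure_def using assms by blast

lemma spanning_cycleI:
  "alt_cycle N xs zs \<Longrightarrow> distinct xs \<Longrightarrow> set xs = X \<Longrightarrow> distinct zs \<Longrightarrow> set zs \<subseteq> Y \<Longrightarrow>
    spanning_cycle X"
  unfolding spanning_cycle_def by blast

end

locale dense_bipartite = neighbourhood_system +
  assumes finite_Y: "finite Y" and card_Y: "card Y + 1 \<le> 2 * \<delta>"
begin

lemma card_Un_Int_neighbours:
  assumes "N u \<subseteq> Y" "N v \<subseteq> Y"
  shows "card (N u \<union> N v) + card (N u \<inter> N v) = card (N u) + card (N v)"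
    and "card (N u \<union> N v) \<le> card Y"
proof -
  have "finite (N u)" "finite (N v)" using assms finite_Y finite_subset by auto
  from card_Un_Int[OF this]
  show "card (N u \<union> N v) + card (N u \<inter> N v) = card (N u) + card (N v)" by linarith
  show "card (N u \<union> N v) \<le> card Y" using assms finite_Y by (intro card_mono) auto
qed

lemma common_neighbour:
  assumes "N u \<subseteq> Y" "N v \<subseteq> Y" "\<delta> \<le> card (N u)" "\<delta> \<le> card (N v)"
  shows "N u \<inter> N v \<noteq> {}"
proof
  assume "N u \<inter> N v = {}"
  then show False using card_Un_Int_neighbours[OF assms(1,2)] assms(3,4) card_Y by simp
qed

lemma unique_common_neighbour:
  assumes "N u \<subseteq> Y" "N v \<subseteq> Y" "\<delta> \<le> card (N u)" "\<delta> \<le> card (N v)" "N u \<inter> N v = {c}"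
  shows "N u \<union> N v = Y" "card (N u) = \<delta>" "card (N v) = \<delta>" "card Y + 1 = 2 * \<delta>"
proof -
  note card_Un_Int_neighbours[OF assms(1,2)]
  then have "card (N u \<union> N v) = card Y" using assms(3-5) card_Y by auto
  then show "N u \<union> N v = Y" using assms(1,2) finite_Y by (intro card_subset_eq) auto
  show "card (N u) = \<delta>" "card (N v) = \<delta>" "card Y + 1 = 2 * \<delta>"
    using \<open>card (N u \<union> N v) = card Y\<close> card_Un_Int_neighbours[OF assms(1,2)] assms(3-5) card_Y
    by auto
qed

lemma spanning_cycle_or_G2_pair:
  assumes "u \<noteq> v" "N u \<subseteq> Y" "N v \<subseteq> Y" "\<delta> \<le> card (N u)" "\<delta> \<le> card (N v)"
  shows "spanning_cycle {u, v} \<or> G2_structure {u, v}"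
proof (cases "\<exists>c\<^sub>1 c\<^sub>2. c\<^sub>1 \<in> N u \<inter> N v \<and> c\<^sub>2 \<in> N u \<inter> N v \<and> c\<^sub>1 \<noteq> c\<^sub>2")
  case True
  then obtain c\<^sub>1 c\<^sub>2 where c: "c\<^sub>1 \<in> N u \<inter> N v" "c\<^sub>2 \<in> N u \<inter> N v" "c\<^sub>1 \<noteq> c\<^sub>2" by blast
  have "alt_cycle N [u, v] [c\<^sub>1, c\<^sub>2]"
    using c by (auto simp: alt_cycle_def less_Suc_eq nth_Cons split: nat.splits)
  then have "spanning_cycle {u, v}" using c assms by (intro spanning_cycleI) auto
  then show ?thesis ..
next
  case False
  obtain c where c: "c \<in> N u \<inter> N v" using common_neighbour[OF assms(2-5)] by blast
  then have uc: "N u \<inter> N v = {c}" using False by blast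
  note sizes = unique_common_neighbour[OF assms(2-5) uc]
  have "finite (N u)" "finite (N v)" using assms(2,3) finite_Y finite_subset by auto
  then have cards: "card (N u - {c}) = \<delta> - 1" "card (N v - {c}) = \<delta> - 1"
    using c sizes by (simp_all add: card_Diff_singleton)
  have Y: "Y = insert c ((N u - {c}) \<union> (N v - {c}))" using sizes(1) c by blast
  have PQ: "(N u - {c}) \<inter> (N v - {c}) = {}" using uc by blast
  have "G2_structure {u, v}"
    unfolding G2_structure_def
    by (rule exI[of _ "{u}"], rule exI[of _ "{v}"], rule exI[of _ c],
        rule exI[of _ "N u - {c}"], rule exI[of _ "N v - {c}"])
      (use assms(1) IntD1[OF c] IntD2[OF c] cards Y PQ in \<open>simp_all add: insert_commute insert_absorb\<close>)
  then show ?thesis by simp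
qed

lemma spanning_cycle_insert:
  assumes c: "alt_cycle N xs zs" "distinct xs" "distinct zs" "set zs \<subseteq> Y" "x \<notin> set xs"
    and i: "i < length xs"
    and uw: "u \<noteq> w" "u \<in> N x" "w \<in> N x" "u \<in> N (xs ! i)" "w \<in> N (xs ! (Suc i mod length xs))"
      "u \<in> Y" "w \<in> Y" "u \<notin> set zs - {zs ! i}" "w \<notin> set zs - {zs ! i}"
  shows "spanning_cycle (insert x (set xs))"
proof -
  define P Ys where "P = rotate (Suc i) xs" and "Ys = butlast (rotate (Suc i) zs)"
  note opened = alt_cycle_open[OF c(1,3) i, folded P_def Ys_def]
  have "P \<noteq> []" using opened(1) by (rule alt_path_not_Nil)
  have "alt_path N (P @ [x]) (Ys @ [u])"
    using alt_path_append[OF opened(1) alt_path_singleton] opened(3) uw by simp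
  then have "alt_cycle N (P @ [x]) ((Ys @ [u]) @ [w])"
    using \<open>P \<noteq> []\<close> opened(2) uw by (intro alt_cycle_close) (auto simp: Suc_le_eq)
  then show ?thesis
    by (rule spanning_cycleI) (use c opened(4,5) uw in \<open>auto simp: P_def\<close>)
qed

lemma spanning_cycle_reroute:
  assumes c: "alt_cycle N xs zs" "distinct xs" "distinct zs" "set zs \<subseteq> Y" "x \<notin> set xs"
    and il: "i < length xs" "l < length xs" "i \<noteq> l" and zx: "zs ! i \<in> N x" "zs ! l \<in> N x"
    and r: "r \<in> Y" "r \<notin> set zs" "r \<in> N (xs ! i)" "r \<in> N (xs ! l)"
  shows "spanning_cycle (insert x (set xs))"
proof -
  let ?k = "length xs"
  obtain P1 Y1 P2 Y2 where p: "alt_path N P1 Y1" "alt_path N P2 Y2" "hd P1 = xs ! (Suc i mod ?k)"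
     "last P1 = xs ! l" "hd P2 = xs ! (Suc l mod ?k)" "last P2 = xs ! i"
     "distinct (P1 @ P2)" "set (P1 @ P2) = set xs" "distinct (Y1 @ Y2)"
     "set (Y1 @ Y2) = set zs - {zs ! i, zs ! l}"
    using alt_cycle_split[OF c(1-3) il] by blast
  have ne: "P1 \<noteq> []" "P2 \<noteq> []" using p(1,2) alt_path_not_Nil by auto
  have cz: "zs ! i \<in> N (xs ! (Suc i mod ?k))" "zs ! l \<in> N (xs ! (Suc l mod ?k))"
    using c(1) il unfolding alt_cycle_def by auto
  \<comment> \<open>The new cycle runs from \<open>xs ! l\<close> backwards along \<open>P1\<close>, through \<open>zs ! i\<close>, \<open>x\<close>, \<open>zs ! l\<close>,
    then along \<open>P2\<close> to \<open>xs ! i\<close> and closes through \<open>r\<close>.\<close>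
  have "alt_path N (rev P1 @ [x]) (rev Y1 @ [zs ! i])"
    using alt_path_append[OF alt_path_rev[OF p(1)] alt_path_singleton, of "zs ! i"] cz zx ne p(3)
    by (simp add: last_rev)
  then have "alt_path N ((rev P1 @ [x]) @ P2) ((rev Y1 @ [zs ! i]) @ zs ! l # Y2)"
    by (rule alt_path_append[OF _ p(2)]) (use zx cz p(5) in auto)
  then have "alt_cycle N ((rev P1 @ [x]) @ P2) (((rev Y1 @ [zs ! i]) @ zs ! l # Y2) @ [r])"
    by (rule alt_cycle_close) (use r ne p(4,6) in \<open>auto simp: hd_rev Suc_le_eq\<close>)
  moreover have "zs ! i \<noteq> zs ! l" "zs ! i \<in> set zs" "zs ! l \<in> set zs"
    using il c(1,3) by (auto simp: alt_cycle_def nth_eq_iff_index_eq)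
  ultimately show ?thesis
    by (elim spanning_cycleI) (use c p(7-10) r in auto)
qed

lemma spanning_cycle_reroute_hub:
  assumes c: "alt_cycle N xs zs" "distinct xs" "distinct zs" "set zs \<subseteq> Y" "x \<notin> set xs"
    and lj: "l < length xs" "j < length xs" "l \<noteq> j" and zx: "zs ! l \<in> N x" "zs ! j \<in> N x"
    and hub: "set zs \<subseteq> N (xs ! j)"
    and r: "r \<in> Y" "r \<notin> set zs" "r \<in> N (xs ! l)" "r \<in> N (xs ! (Suc j mod length xs))"
    and b: "xs ! (Suc j mod length xs) \<noteq> xs ! l"
  shows "spanning_cycle (insert x (set xs))"
proof -
  let ?k = "length xs" and ?b = "xs ! (Suc j mod length xs)"
  obtain P1 Y1 P2 Y2 where p: "alt_path N P1 Y1" "alt_path N P2 Y2" "hd P1 = xs ! (Suc l mod ?k)"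
     "last P1 = xs ! j" "hd P2 = ?b" "last P2 = xs ! l"
     "distinct (P1 @ P2)" "set (P1 @ P2) = set xs" "distinct (Y1 @ Y2)"
     "set (Y1 @ Y2) = set zs - {zs ! l, zs ! j}"
    using alt_cycle_split[OF c(1-3) lj] by blast
  obtain c' rest where P2: "P2 = ?b # c' # rest"
    using p(2,5,6) b alt_path_not_Nil[OF p(2)]
    by (cases P2; cases "tl P2") (auto simp: alt_path_def)
  obtain z Y2' where Y2: "Y2 = z # Y2'" using p(2) P2 by (cases Y2) (auto simp: alt_path_def)
  have z: "z \<in> N c'" "alt_path N (c' # rest) Y2'" "z \<in> set zs"
    using p(2,10) unfolding P2 Y2 alt_path_Cons_Cons by auto
  have cz: "zs ! l \<in> N (xs ! (Suc l mod ?k))" "zs ! j \<in> N ?b"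
    using c(1) lj unfolding alt_cycle_def by auto
  \<comment> \<open>Since the hub \<open>xs ! j\<close> sees every connector, the first connector \<open>z\<close> of \<open>P2\<close> may be
    reused to join \<open>xs ! j\<close> to the second vertex of \<open>P2\<close>; the freed first vertex \<open>?b\<close> of \<open>P2\<close>
    is reattached through \<open>r\<close> and \<open>zs ! j\<close>.\<close>
  have "alt_path N ([x] @ P1) ([] @ zs ! l # Y1)"
    by (rule alt_path_append[OF alt_path_singleton p(1)]) (use zx cz p(3) in auto)
  then have "alt_path N (([x] @ P1) @ (c' # rest)) (([] @ zs ! l # Y1) @ z # Y2')"
    by (rule alt_path_append[OF _ z(2)]) (use z hub p(4) alt_path_not_Nil[OF p(1)] in auto)
  then have "alt_path N ((([x] @ P1) @ (c' # rest)) @ [?b]) ((([] @ zs ! l # Y1) @ z # Y2') @ [r])"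
    by (rule alt_path_append[OF _ alt_path_singleton]) (use r p(6) P2 in auto)
  then have "alt_cycle N ((([x] @ P1) @ (c' # rest)) @ [?b])
      (((([] @ zs ! l # Y1) @ z # Y2') @ [r]) @ [zs ! j])"
    by (rule alt_cycle_close) (use cz zx in auto)
  moreover have "zs ! l \<noteq> zs ! j" "zs ! l \<in> set zs" "zs ! j \<in> set zs"
    using lj c(1,3) by (auto simp: alt_cycle_def nth_eq_iff_index_eq)
  ultimately show ?thesis
    by (elim spanning_cycleI) (use p(7-10) c(4,5) P2 Y2 r in auto)
qed

lemma spanning_cycle_across:
  assumes AB: "finite A" "finite B" "A \<noteq> {}" "B \<noteq> {}" "A \<inter> B = {}" "x \<notin> A \<union> B"
    and NA: "\<forall>a\<in>A. N a = insert y\<^sub>0 P" and NB: "\<forall>b\<in>B. N b = insert y\<^sub>0 Q"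
    and PQ: "insert y\<^sub>0 (P \<union> Q) \<subseteq> Y" "y\<^sub>0 \<notin> P" "y\<^sub>0 \<notin> Q" "P \<inter> Q = {}"
    and pq: "q \<in> N x" "q \<in> P" "p \<in> N x" "p \<in> Q"
    and card: "card A \<le> card P" "card B \<le> card Q"
  shows "spanning_cycle (insert x (A \<union> B))"
proof -
  obtain as where as: "set as = A" "distinct as" using finite_distinct_list[OF AB(1)] by blast
  obtain bs where bs: "set bs = B" "distinct bs" using finite_distinct_list[OF AB(2)] by blast
  have fin: "finite P" "finite Q" using card AB(1-4) by (auto intro: card_ge_0_finite)
  then have "card A - 1 \<le> card (P - {q})" "card B - 1 \<le> card (Q - {p})"
    using card pq by (simp_all add: card_Diff_singleton)
  then obtain ps qs where ps: "distinct ps" "set ps \<subseteq> P - {q}" "length ps = card A - 1"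
    and qs: "distinct qs" "set qs \<subseteq> Q - {p}" "length qs = card B - 1"
    by (meson obtain_distinct_list_subset)
  have ne: "as \<noteq> []" "bs \<noteq> []" using as bs AB by auto
  have "length as = card A" "length bs = card B" using as bs distinct_card by metis+
  then have len: "length as = Suc (length ps)" "length bs = Suc (length qs)"
    using ps(3) qs(3) AB(1-4) by (simp_all add: card_gt_0_iff)
  have "alt_path N as ps" "alt_path N bs qs"
    using len ps qs as bs NA NB by (auto intro!: alt_path_common_neighbours)
  \<comment> \<open>The cycle is \<open>x q a\<^sub>1 p\<^sub>1 a\<^sub>2 \<dots> a\<^sub>s y\<^sub>0 b\<^sub>1 q\<^sub>1 b\<^sub>2 \<dots> b\<^sub>t p x\<close>.\<close>
  then have "alt_path N ([x] @ as) ([] @ q # ps)"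
    by (intro alt_path_append[OF alt_path_singleton]) (use pq ne as NA in auto)
  then have "alt_path N (([x] @ as) @ bs) (([] @ q # ps) @ y\<^sub>0 # qs)"
    by (rule alt_path_append[OF _ \<open>alt_path N bs qs\<close>]) (use ne as bs NA NB in auto)
  then have "alt_cycle N (([x] @ as) @ bs) ((([] @ q # ps) @ y\<^sub>0 # qs) @ [p])"
    by (rule alt_cycle_close) (use pq ne bs NB in \<open>auto simp: Suc_le_eq\<close>)
  then show ?thesis
    by (rule spanning_cycleI) (use as bs ps qs pq PQ AB in auto)
qed

lemma G2_structure_insert:
  assumes G: "G2_structure X" and x: "x \<notin> X" "N x \<subseteq> Y" "\<delta> \<le> card (N x)"
    and X: "finite X" "card X < \<delta>"
  shows "spanning_cycle (insert x X) \<or> G2_structure (insert x X)"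
proof -
  obtain A B y\<^sub>0 P Q where AB: "X = A \<union> B" "A \<inter> B = {}" "A \<noteq> {}" "B \<noteq> {}"
    and PQ: "Y = insert y\<^sub>0 (P \<union> Q)" "y\<^sub>0 \<notin> P" "y\<^sub>0 \<notin> Q" "P \<inter> Q = {}"
      "card P = \<delta> - 1" "card Q = \<delta> - 1"
    and NA: "\<forall>a\<in>A. N a = insert y\<^sub>0 P" and NB: "\<forall>b\<in>B. N b = insert y\<^sub>0 Q"
    using G unfolding G2_structure_def by blast
  have fin: "finite A" "finite B" "finite P" "finite Q" using AB PQ X(1) finite_Y by auto
  have "card A + card B = card X" "0 < card A" "0 < card B"
    using AB fin by (auto simp: card_Un_disjoint card_gt_0_iff)
  then have card: "card A \<le> card P" "card B \<le> card Q" "card (insert y\<^sub>0 P) = \<delta>"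
    "card (insert y\<^sub>0 Q) = \<delta>"
    using PQ X(2) fin by auto
  consider "N x \<subseteq> insert y\<^sub>0 P" | "N x \<subseteq> insert y\<^sub>0 Q"
    | q p where "q \<in> N x" "q \<in> P" "p \<in> N x" "p \<in> Q"
    using x(2) PQ(1) by blast
  then show ?thesis
  proof cases
    case 1
    then have "N x = insert y\<^sub>0 P" using x(3) card fin by (intro card_seteq) auto
    then have "G2_structure (insert x A \<union> B)"
      using AB PQ NA NB x(1) by (intro G2_structureI[of _ "insert x A" B y\<^sub>0 P Q]) auto
    then show ?thesis using AB by simp
  next
    case 2
    then have "N x = insert y\<^sub>0 Q" using x(3) card fin by (intro card_seteq) auto
    then have "G2_structure (A \<union> insert x B)"
      using AB PQ NA NB x(1) by (intro G2_structureI[of _ A "insert x B" y\<^sub>0 P Q]) auto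
    then show ?thesis using AB by simp
  next
    case 3
    moreover have "x \<notin> A \<union> B" "insert y\<^sub>0 (P \<union> Q) \<subseteq> Y" using x(1) AB(1) PQ(1) by auto
    ultimately have "spanning_cycle (insert x (A \<union> B))"
      using spanning_cycle_across[OF fin(1,2) AB(3,4,2) _ NA NB _ PQ(2-4) _ _ _ _ card(1,2)] by blast
    then show ?thesis using AB(1) by simp
  qed
qed

end

section \<open>A spanning cycle meeting the neighbourhood of a new vertex least\<close>

locale minimal_spanning_cycle = dense_bipartite +
  fixes X :: "'a set" and x :: 'a and xs zs :: "'a list"
  assumes x_notin: "x \<notin> X" and card_X_less: "card X < \<delta>"
    and degrees: "\<forall>v\<in>insert x X. N v \<subseteq> Y \<and> \<delta> \<le> card (N v)"
    and cycle: "alt_cycle N xs zs" "distinct xs" "set xs = X" "distinct zs" "set zs \<subseteq> Y"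
    and minimal: "\<And>xs' zs'. alt_cycle N xs' zs' \<Longrightarrow> distinct xs' \<Longrightarrow> set xs' = X \<Longrightarrow>
      distinct zs' \<Longrightarrow> set zs' \<subseteq> Y \<Longrightarrow> card (N x \<inter> set zs) \<le> card (N x \<inter> set zs')"
    and no_spanning_cycle: "\<not> spanning_cycle (insert x X)"
begin

abbreviation "k \<equiv> length xs"
abbreviation "S \<equiv> N x"
abbreviation "Z \<equiv> set zs"
abbreviation "R \<equiv> Y - set zs"
abbreviation "succ i \<equiv> xs ! (Suc i mod k)"

lemma length_zs: "length zs = k" and k_ge_2: "2 \<le> k"
  using cycle(1) by (simp_all add: alt_cycle_def)

lemma k_pos: "0 < k"
  using k_ge_2 by linarith

lemma card_X: "card X = k" and card_Z: "card Z = k"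
  using cycle(2-4) length_zs by (auto simp: distinct_card)

lemma k_less: "k < \<delta>"
  using card_X card_X_less by simp

lemma connector_neighbours: "i < k \<Longrightarrow> zs ! i \<in> N (xs ! i) \<and> zs ! i \<in> N (succ i)"
  using cycle(1) by (simp add: alt_cycle_def)

lemma neighbours_x: "S \<subseteq> Y" "finite S" "\<delta> \<le> card S"
  using degrees finite_Y finite_subset by auto

lemma neighbours_X: "v \<in> X \<Longrightarrow> N v \<subseteq> Y \<and> finite (N v) \<and> \<delta> \<le> card (N v)"
  using degrees finite_Y finite_subset by auto

lemma nth_xs_in: "i < k \<Longrightarrow> xs ! i \<in> X"
  using cycle(3) by auto

lemma succ_in: "succ i \<in> X"
proof -
  have "Suc i mod k < k" using k_pos by (rule mod_less_divisor)
  then show ?thesis by (rule nth_xs_in)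
qed

lemma in_X_nth: "v \<in> X \<Longrightarrow> \<exists>i<k. v = xs ! i"
  using cycle(3) by (auto simp: in_set_conv_nth)

lemma no_insertion:
  assumes "i < k" "u \<noteq> w" "u \<in> S" "w \<in> S" "u \<in> N (xs ! i)" "w \<in> N (succ i)"
    "u \<notin> Z - {zs ! i}" "w \<notin> Z - {zs ! i}"
  shows False
proof -
  have "u \<in> Y" "w \<in> Y" "x \<notin> set xs" using assms(3,4) neighbours_x(1) x_notin cycle(3) by auto
  then show False
    using spanning_cycle_insert[OF cycle(1,2,4,5) _ assms(1-6) _ _ assms(7,8)] no_spanning_cycle
      cycle(3) by simp
qed

lemma card_neighbours_split:
  "v \<in> insert x X \<Longrightarrow> card (N v) = card (N v \<inter> Z) + card (N v \<inter> R)"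
proof -
  assume "v \<in> insert x X"
  then have "finite (N v)" "N v \<subseteq> Y" using degrees finite_Y finite_subset by auto
  moreover have "N v \<inter> R = N v - (N v \<inter> Z)" using \<open>N v \<subseteq> Y\<close> by blast
  ultimately show ?thesis by (simp add: card_Diff_subset card_mono)
qed

lemma card_R: "card R + k = card Y"
  using cycle(5) finite_Y card_Z card_mono[OF finite_Y cycle(5)] by (simp add: card_Diff_subset)

lemma card_neighbours_R: "v \<in> insert x X \<Longrightarrow> \<delta> \<le> card (N v \<inter> R) + k"
  using card_neighbours_split[of v] degrees card_Z card_mono[of Z "N v \<inter> Z"] by fastforce

lemma consecutive_common_neighbour:
  assumes avoid: "S \<inter> Z = {}" and i: "i < k"
  obtains u where "N (xs ! i) \<inter> S = {u}" "N (succ i) \<inter> S = {u}"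
proof -
  have eq: "u = w" if "u \<in> N (xs ! i) \<inter> S" "w \<in> N (succ i) \<inter> S" for u w
    using no_insertion[OF i, of u w] that avoid by blast
  obtain u where u: "u \<in> N (xs ! i) \<inter> S"
    using common_neighbour[of "xs ! i" x] neighbours_X[OF nth_xs_in[OF i]] neighbours_x by blast
  obtain w where w: "w \<in> N (succ i) \<inter> S"
    using common_neighbour[of "succ i" x] neighbours_X[OF succ_in] neighbours_x by blast
  have "N (xs ! i) \<inter> S = {u}" "N (succ i) \<inter> S = {u}"
    using eq[OF _ w] eq[OF u] u w by blast+
  then show thesis by (rule that)
qed

lemma common_neighbour_all:
  assumes avoid: "S \<inter> Z = {}"
  obtains u where "\<And>v. v \<in> X \<Longrightarrow> N v \<inter> S = {u}"
proof -
  obtain u where u: "N (xs ! 0) \<inter> S = {u}"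
    using consecutive_common_neighbour[OF avoid k_pos] by metis
  have "N (xs ! i) \<inter> S = {u}" if "i < k" for i
    using that
  proof (induction i)
    case (Suc i)
    then show ?case using consecutive_common_neighbour[OF avoid, of i] by auto
  qed (use u in simp)
  then show thesis using that in_X_nth by blast
qed

lemma G2_structure_if_avoiding:
  assumes avoid: "S \<inter> Z = {}"
  shows "G2_structure (insert x X)"
proof -
  obtain u where u: "\<And>v. v \<in> X \<Longrightarrow> N v \<inter> S = {u}" using common_neighbour_all[OF avoid] by blast
  have "xs ! 0 \<in> X" using nth_xs_in[OF k_pos] .
  note sizes = unique_common_neighbour[OF _ neighbours_x(1) _ neighbours_x(3) u[OF this]]
  have NX: "N v = insert u (Y - S)" if "v \<in> X" for v
    using unique_common_neighbour(1)[OF _ neighbours_x(1) _ neighbours_x(3) u[OF that]]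
      u[OF that] neighbours_X[OF that] by blast
  have uS: "u \<in> S" using u[OF \<open>xs ! 0 \<in> X\<close>] by blast
  have "card (Y - S) = \<delta> - 1" "card (S - {u}) = \<delta> - 1"
    using sizes neighbours_X[OF \<open>xs ! 0 \<in> X\<close>] neighbours_x finite_Y uS
    by (simp_all add: card_Diff_subset)
  then show ?thesis
    using uS NX x_notin \<open>xs ! 0 \<in> X\<close> neighbours_x(1)
    by (intro G2_structureI[of _ X "{x}" u "Y - S" "S - {u}"]) auto
qed

definition J :: "nat set" where
  "J = {i. i < k \<and> zs ! i \<in> S}"

definition outer :: "nat \<Rightarrow> 'a set" where
  "outer i = N (xs ! i) \<inter> R"

lemma finite_J: "finite J" and J_D: "i \<in> J \<Longrightarrow> i < k" "i \<in> J \<Longrightarrow> zs ! i \<in> S"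
  by (auto simp: J_def)

lemma card_J: "card J = card (S \<inter> Z)"
proof -
  have "bij_betw (\<lambda>i. zs ! i) J (S \<inter> Z)"
    using cycle(4) length_zs
    by (auto simp: bij_betw_def inj_on_def J_def in_set_conv_nth nth_eq_iff_index_eq)
  then show ?thesis by (rule bij_betw_same_card)
qed

lemma finite_outer: "finite (outer i)" and finite_R: "finite R"
  using finite_Y by (auto simp: outer_def)

lemma card_outer: "i < k \<Longrightarrow> \<delta> \<le> card (outer i) + k"
  using card_neighbours_R[of "xs ! i"] nth_xs_in by (simp add: outer_def)

lemma card_S_R: "card (S \<inter> R) + card (S \<inter> Z) = card S"
  using card_neighbours_split[of x] by simp

lemma outside_neighbours_x: "N x - Z = S \<inter> R"
  using neighbours_x(1) by blast

lemma outside_neighbours: "i < k \<Longrightarrow> N (xs ! i) - Z = outer i"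
  using neighbours_X[OF nth_xs_in] by (auto simp: outer_def)

lemma outer_x_not_adjacent:
  assumes i: "i \<in> J" and r: "r \<in> S" "r \<in> R"
  shows "r \<notin> N (xs ! i)" "r \<notin> N (succ i)"
proof -
  have "r \<noteq> zs ! i" "r \<notin> Z" using r J_D(1)[OF i] length_zs by auto
  then show "r \<notin> N (xs ! i)" "r \<notin> N (succ i)"
    using no_insertion[OF J_D(1)[OF i], of r "zs ! i"] no_insertion[OF J_D(1)[OF i], of "zs ! i" r]
      connector_neighbours[OF J_D(1)[OF i]] J_D(2)[OF i] r(1) by auto
qed

text \<open>Here the minimality of the cycle is used: replacing the connector \<open>zs ! i\<close>, a neighbour
  of \<open>x\<close>, by \<open>r\<close> would give a spanning cycle meeting \<open>S\<close> less.\<close>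

lemma outer_not_shared_with_succ:
  assumes i: "i \<in> J" and r: "r \<in> R" "r \<in> N (xs ! i)"
  shows "r \<notin> N (succ i)"
proof
  assume r': "r \<in> N (succ i)"
  let ?zs = "zs[i := r]"
  have "r \<notin> S" using outer_x_not_adjacent(1)[OF i _ r(1)] r(2) by blast
  have set_zs: "set ?zs = insert r (Z - {zs ! i})"
    using cycle(4) J_D(1)[OF i] length_zs by (simp add: set_update_distinct)
  have "alt_cycle N xs ?zs" using alt_cycle_update[OF cycle(1) r(2) r'] .
  moreover have "distinct ?zs" using cycle(4) r(1) by (simp add: distinct_list_update)
  moreover have "set ?zs \<subseteq> Y" using set_zs cycle(5) r(1) by auto
  ultimately have "card (S \<inter> Z) \<le> card (S \<inter> set ?zs)" using minimal cycle(2,3) by blast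
  moreover have "S \<inter> set ?zs = (S \<inter> Z) - {zs ! i}" using set_zs \<open>r \<notin> S\<close> by auto
  moreover have "zs ! i \<in> S \<inter> Z" using J_D[OF i] length_zs by auto
  ultimately show False by (metis card_Diff1_less finite_Int finite_set not_le)
qed

lemma outer_disjoint:
  assumes i: "i \<in> J" and l: "l \<in> J" and "i \<noteq> l"
  shows "outer i \<inter> outer l = {}"
proof (rule ccontr)
  assume "outer i \<inter> outer l \<noteq> {}"
  then obtain r where r: "r \<in> Y" "r \<notin> Z" "r \<in> N (xs ! i)" "r \<in> N (xs ! l)"
    by (auto simp: outer_def)
  have "x \<notin> set xs" using x_notin cycle(3) by simp
  then have "spanning_cycle (insert x (set xs))"
    using spanning_cycle_reroute[OF cycle(1,2,4,5) _ J_D(1)[OF i] J_D(1)[OF l] \<open>i \<noteq> l\<close>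
        J_D(2)[OF i] J_D(2)[OF l] r] by blast
  then show False using no_spanning_cycle cycle(3) by simp
qed

lemma card_outer_pair:
  assumes "i \<in> J"
  shows "card (outer i) + card (outer (Suc i mod k)) + card (S \<inter> R) \<le> card R"
proof -
  have "outer i \<inter> outer (Suc i mod k) = {}" "outer i \<inter> (S \<inter> R) = {}"
    "outer (Suc i mod k) \<inter> (S \<inter> R) = {}"
    using outer_not_shared_with_succ[OF assms] outer_x_not_adjacent[OF assms]
    by (auto simp: outer_def)
  then have "card (outer i \<union> outer (Suc i mod k) \<union> (S \<inter> R)) =
      card (outer i) + card (outer (Suc i mod k)) + card (S \<inter> R)"
    using finite_outer finite_R by (simp add: card_Un_disjoint Int_Un_distrib2)
  moreover have "card (outer i \<union> outer (Suc i mod k) \<union> (S \<inter> R)) \<le> card R"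
    using finite_R by (intro card_mono) (auto simp: outer_def)
  ultimately show ?thesis by simp
qed

lemma card_outer_sum:
  "card (S \<inter> R) + (\<Sum>i\<in>J. card (outer i)) = card ((S \<inter> R) \<union> (\<Union>i\<in>J. outer i))"
proof -
  have "card (\<Union>i\<in>J. outer i) = (\<Sum>i\<in>J. card (outer i))"
    using finite_J finite_outer outer_disjoint by (intro card_UN_disjoint) auto
  moreover have "(S \<inter> R) \<inter> (\<Union>i\<in>J. outer i) = {}"
    using outer_x_not_adjacent(1) by (auto simp: outer_def)
  ultimately show ?thesis
    using finite_R finite_J finite_outer by (simp add: card_Un_disjoint)
qed

lemma card_outer_sum_le: "card (S \<inter> R) + (\<Sum>i\<in>J. card (outer i)) \<le> card R"
  unfolding card_outer_sum using finite_R by (intro card_mono) (auto simp: outer_def)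

lemma Suc_mod_k_less: "Suc i mod k < k"
  using k_pos by (rule mod_less_divisor)

lemma J_nonempty:
  assumes "S \<inter> Z \<noteq> {}" shows "J \<noteq> {}"
proof
  assume "J = {}"
  then have "card (S \<inter> Z) = 0" using card_J by simp
  then show False using assms by simp
qed

lemma delta_eq_if_meeting:
  assumes meets: "S \<inter> Z \<noteq> {}"
  shows "\<delta> = k + 1"
proof (rule ccontr)
  assume "\<delta> \<noteq> k + 1"
  then have two: "2 \<le> \<delta> - k" using k_less by linarith
  obtain i where i: "i \<in> J" using J_nonempty[OF meets] by blast
  have "card J * 2 \<le> (\<Sum>i\<in>J. card (outer i))"
    using sum_bounded_below[of J 2 "\<lambda>i. card (outer i)"] two card_outer J_D(1) by fastforce
  then show False
    using card_outer_pair[OF i] card_outer[OF J_D(1)[OF i]] card_outer[OF Suc_mod_k_less[of i]]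
      card_outer_sum_le card_S_R card_J neighbours_x(3) card_R card_Y
    by linarith
qed

context
  assumes meets: "S \<inter> Z \<noteq> {}"
begin

lemma delta_eq: "\<delta> = k + 1"
  using delta_eq_if_meeting[OF meets] .

lemma card_R_le: "card R \<le> k + 1"
  using card_R card_Y delta_eq by linarith

lemma sum_card_outer: "(\<Sum>i\<in>J. card (outer i)) = card J"
proof -
  have "(\<Sum>i\<in>J. card (outer i)) \<le> card J"
    using card_outer_sum_le card_S_R card_J neighbours_x(3) card_R_le delta_eq by linarith
  moreover have "card J \<le> (\<Sum>i\<in>J. card (outer i))"
    using sum_bounded_below[of J 1 "\<lambda>i. card (outer i)"] card_outer J_D(1) delta_eq by fastforce
  ultimately show ?thesis by simp
qed

lemma card_outer_1: "i \<in> J \<Longrightarrow> card (outer i) = 1"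
proof (rule ccontr)
  assume i: "i \<in> J" "card (outer i) \<noteq> 1"
  have "\<forall>j\<in>J. 1 \<le> card (outer j)" using card_outer J_D(1) delta_eq by fastforce
  moreover have "1 < card (outer i)" using calculation i by fastforce
  ultimately have "(\<Sum>j\<in>J. 1) < (\<Sum>j\<in>J. card (outer j))"
    using i(1) by (intro sum_strict_mono_ex1[OF finite_J]) auto
  then show False using sum_card_outer by simp
qed

lemma connectors_in_neighbours:
  assumes i: "i \<in> J" shows "Z \<subseteq> N (xs ! i)"
proof -
  have "card (N (xs ! i)) = card (N (xs ! i) \<inter> Z) + 1"
    using card_neighbours_split[of "xs ! i"] nth_xs_in[OF J_D(1)[OF i]] card_outer_1[OF i]
    by (simp add: outer_def)
  then have "card Z \<le> card (N (xs ! i) \<inter> Z)"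
    using neighbours_X[OF nth_xs_in[OF J_D(1)[OF i]]] delta_eq card_Z by linarith
  then have "N (xs ! i) \<inter> Z = Z" by (intro card_seteq) auto
  then show ?thesis by blast
qed

lemma R_eq: "R = (S \<inter> R) \<union> (\<Union>i\<in>J. outer i)"
proof (rule sym, rule card_seteq[OF finite_R])
  show "(S \<inter> R) \<union> (\<Union>i\<in>J. outer i) \<subseteq> R" by (auto simp: outer_def)
  show "card R \<le> card ((S \<inter> R) \<union> (\<Union>i\<in>J. outer i))"
    unfolding card_outer_sum[symmetric] sum_card_outer
    using card_R_le card_S_R card_J neighbours_x(3) delta_eq by linarith
qed

text \<open>If the successor of some \<open>j \<in> J\<close> were not in \<open>J\<close>, an off-cycle neighbour of it would lie
  in \<open>outer l\<close> for another \<open>l \<in> J\<close>, and \<open>xs ! j\<close>, adjacent to all connectors, would serve as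
  the hub of a rerouting.\<close>

lemma J_succ:
  assumes j: "j \<in> J" shows "Suc j mod k \<in> J"
proof (rule ccontr)
  assume nj: "Suc j mod k \<notin> J"
  have "card (outer (Suc j mod k)) \<noteq> 0" using card_outer[OF Suc_mod_k_less[of j]] delta_eq by linarith
  then obtain r where "r \<in> outer (Suc j mod k)" by (metis card.empty ex_in_conv)
  then have r: "r \<in> R" "r \<in> N (succ j)" by (simp_all add: outer_def)
  have "r \<notin> S" using outer_x_not_adjacent(2)[OF j _ r(1)] r(2) by blast
  then obtain l where l: "l \<in> J" "r \<in> N (xs ! l)" using R_eq r(1) by (auto simp: outer_def)
  have "l \<noteq> j" using outer_not_shared_with_succ[OF j r(1)] r(2) l(2) by blast
  have "l \<noteq> Suc j mod k" using l(1) nj by blast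
  then have "succ j \<noteq> xs ! l"
    using cycle(2) J_D(1)[OF l(1)] Suc_mod_k_less by (simp add: nth_eq_iff_index_eq)
  moreover have "x \<notin> set xs" "r \<in> Y" "r \<notin> Z" using x_notin cycle(3) r(1) by auto
  ultimately have "spanning_cycle (insert x (set xs))"
    using spanning_cycle_reroute_hub[OF cycle(1,2,4,5) _ J_D(1)[OF l(1)] J_D(1)[OF j] \<open>l \<noteq> j\<close>
        J_D(2)[OF l(1)] J_D(2)[OF j] connectors_in_neighbours[OF j] _ _ l(2) r(2)] by blast
  then show False using no_spanning_cycle cycle(3) by simp
qed

lemma J_all: "i < k \<Longrightarrow> i \<in> J"
proof -
  obtain i\<^sub>0 where i\<^sub>0: "i\<^sub>0 \<in> J" using J_nonempty[OF meets] by blast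
  have "(i\<^sub>0 + t) mod k \<in> J" for t
  proof (induction t)
    case 0 then show ?case using i\<^sub>0 J_D(1)[OF i\<^sub>0] by simp
  next
    case (Suc t)
    then show ?case using J_succ[OF Suc.IH] by (simp add: mod_Suc_eq)
  qed
  moreover assume "i < k"
  then have "(i\<^sub>0 + (k - i\<^sub>0 + i)) mod k = i" using J_D(1)[OF i\<^sub>0] by simp
  ultimately show "i \<in> J" by metis
qed

lemma card_S_R_1: "card (S \<inter> R) = 1"
proof -
  have "J = {..<k}" using J_all J_D(1) by blast
  then show ?thesis
    using card_outer_sum sum_card_outer R_eq card_R_le card_S_R card_J neighbours_x(3) delta_eq
    by simp
qed

lemma connectors_in_neighbours_x: "Z \<subseteq> S"
  using J_all length_zs J_D(2) by (auto simp: in_set_conv_nth)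

lemma private_neighbours:
  assumes "v \<in> insert x X" shows "Z \<subseteq> N v \<and> card (N v - Z) = 1"
proof -
  consider "v = x" | i where "i < k" "v = xs ! i" using assms in_X_nth by blast
  then show ?thesis
  proof cases
    case 2
    then show ?thesis
      using outside_neighbours connectors_in_neighbours[OF J_all] card_outer_1[OF J_all] by simp
  qed (use connectors_in_neighbours_x outside_neighbours_x card_S_R_1 in simp)
qed

lemma private_neighbours_disjoint:
  assumes v: "v \<in> insert x X" and w: "w \<in> insert x X" and "v \<noteq> w"
  shows "(N v - Z) \<inter> (N w - Z) = {}"
proof -
  have x_X: "(N x - Z) \<inter> (N (xs ! i) - Z) = {}" if "i < k" for i
    using outer_x_not_adjacent(1)[OF J_all[OF that]] outside_neighbours_x outside_neighbours[OF that]
    by (auto simp: outer_def)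
  show ?thesis
  proof (cases "v = x")
    case True
    then obtain l where "l < k" "w = xs ! l" using w \<open>v \<noteq> w\<close> in_X_nth by blast
    then show ?thesis using True x_X by simp
  next
    case False
    then obtain i where i: "i < k" "v = xs ! i" using v in_X_nth by blast
    show ?thesis
    proof (cases "w = x")
      case True
      then show ?thesis using i x_X by (simp add: Int_commute)
    next
      case False
      then obtain l where l: "l < k" "w = xs ! l" using w in_X_nth by blast
      then have "i \<noteq> l" using i \<open>v \<noteq> w\<close> by auto
      then show ?thesis using i l outside_neighbours outer_disjoint[OF J_all J_all] by simp
    qed
  qed
qed

lemma G1_structure_if_meeting: "G1_structure (insert x X)"
proof -
  have "Y = Z \<union> (\<Union>v\<in>insert x X. N v)"
  proof
    show "Z \<union> (\<Union>v\<in>insert x X. N v) \<subseteq> Y" using cycle(5) degrees by blast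
    show "Y \<subseteq> Z \<union> (\<Union>v\<in>insert x X. N v)"
      using R_eq nth_xs_in J_D(1) by (auto simp: outer_def)
  qed
  moreover have "card Z = \<delta> - 1" using card_Z delta_eq by simp
  ultimately show ?thesis
    unfolding G1_structure_def using cycle(5) private_neighbours private_neighbours_disjoint
    by (intro exI[of _ Z] conjI ballI impI) simp_all
qed

end

end

context dense_bipartite
begin

lemma obtain_minimal_spanning_cycle:
  assumes "spanning_cycle X"
  obtains xs zs where "alt_cycle N xs zs" "distinct xs" "set xs = X" "distinct zs" "set zs \<subseteq> Y"
    "\<And>xs' zs'. alt_cycle N xs' zs' \<Longrightarrow> distinct xs' \<Longrightarrow> set xs' = X \<Longrightarrow> distinct zs' \<Longrightarrow>
      set zs' \<subseteq> Y \<Longrightarrow> card (N x \<inter> set zs) \<le> card (N x \<inter> set zs')"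
proof -
  let ?C = "\<lambda>(xs, zs). alt_cycle N xs zs \<and> distinct xs \<and> set xs = X \<and> distinct zs \<and> set zs \<subseteq> Y"
  obtain c where "?C c" using assms unfolding spanning_cycle_def by auto
  then obtain c' where "?C c'" and "\<forall>c''. ?C c'' \<longrightarrow> card (N x \<inter> set (snd c')) \<le> card (N x \<inter> set (snd c''))"
    using ex_has_least_nat[of ?C c "\<lambda>c. card (N x \<inter> set (snd c))"] by blast
  then show thesis using that[of "fst c'" "snd c'"] by (cases c') auto
qed

lemma spanning_cycle_or_structure_insert:
  assumes IH: "spanning_cycle X \<or> G2_structure X" and x: "x \<notin> X"
    and X: "finite X" "card X < \<delta>" and degrees: "\<forall>v\<in>insert x X. N v \<subseteq> Y \<and> \<delta> \<le> card (N v)"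
  shows "spanning_cycle (insert x X) \<or> G2_structure (insert x X) \<or>
    (\<delta> = card X + 1 \<and> G1_structure (insert x X))"
proof (cases "spanning_cycle (insert x X) \<or> G2_structure X")
  case True
  then show ?thesis using G2_structure_insert[OF _ x _ _ X] degrees by auto
next
  case False
  then obtain xs zs where "alt_cycle N xs zs" "distinct xs" "set xs = X" "distinct zs" "set zs \<subseteq> Y"
    and "\<And>xs' zs'. alt_cycle N xs' zs' \<Longrightarrow> distinct xs' \<Longrightarrow> set xs' = X \<Longrightarrow> distinct zs' \<Longrightarrow>
      set zs' \<subseteq> Y \<Longrightarrow> card (N x \<inter> set zs) \<le> card (N x \<inter> set zs')"
    using obtain_minimal_spanning_cycle IH by metis
  then interpret minimal_spanning_cycle N Y \<delta> X x xs zs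
    using x X(2) degrees False by unfold_locales auto
  show ?thesis
    using G2_structure_if_avoiding delta_eq_if_meeting G1_structure_if_meeting card_X by auto
qed

lemma spanning_cycle_or_structure:
  assumes "finite X" "2 \<le> card X" "card X \<le> \<delta>" "\<forall>v\<in>X. N v \<subseteq> Y \<and> \<delta> \<le> card (N v)"
  shows "spanning_cycle X \<or> G2_structure X \<or> (\<delta> = card X \<and> G1_structure X)"
  using assms
proof (induction X rule: finite_induct)
  case (insert x F)
  show ?case
  proof (cases "2 \<le> card F")
    case True
    then have "spanning_cycle F \<or> G2_structure F" using insert by auto
    then show ?thesis using spanning_cycle_or_structure_insert[of F x] insert by auto
  next
    case False
    then have "card F = 1" using insert by auto
    then obtain u where "F = {u}" by (auto simp: card_1_singleton_iff)
    then show ?thesis using spanning_cycle_or_G2_pair[of x u] insert by auto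
  qed
qed simp

end

section \<open>Bipartite graphs and the isomorphisms\<close>

definition neighbours :: "'a set set \<Rightarrow> 'a \<Rightarrow> 'a set" where
  "neighbours E v = {u. {v, u} \<in> E}"

lemma bipartite_edgeD:
  assumes "bipartite_graph X Y E" "{u, v} \<in> E"
  shows "u \<in> X \<and> v \<in> Y \<or> u \<in> Y \<and> v \<in> X"
  using assms unfolding bipartite_graph_def by (auto simp: doubleton_eq_iff)

lemma bipartite_neighbours_subset:
  assumes "bipartite_graph X Y E" "v \<in> X"
  shows "neighbours E v \<subseteq> Y"
  using assms bipartite_edgeD[OF assms(1)] unfolding bipartite_graph_def neighbours_def by blast

definition interleave :: "'a list \<Rightarrow> 'a list \<Rightarrow> 'a list" where
  "interleave xs zs = map (\<lambda>j. if even j then xs ! (j div 2) else zs ! (j div 2)) [0..<2 * length xs]"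

lemma length_interleave [simp]: "length (interleave xs zs) = 2 * length xs"
  by (simp add: interleave_def)

lemma nth_interleave:
  "j < 2 * length xs \<Longrightarrow> interleave xs zs ! j = (if even j then xs ! (j div 2) else zs ! (j div 2))"
  by (simp add: interleave_def)

lemma set_interleave:
  assumes "length zs = length xs" shows "set (interleave xs zs) = set xs \<union> set zs"
proof
  show "set (interleave xs zs) \<subseteq> set xs \<union> set zs"
    using assms by (auto simp: interleave_def)
  show "set xs \<union> set zs \<subseteq> set (interleave xs zs)"
  proof
    fix v assume "v \<in> set xs \<union> set zs"
    then obtain t where t: "t < length xs" "v = xs ! t \<or> v = zs ! t"
      using assms by (auto simp: in_set_conv_nth)
    then have "v = interleave xs zs ! (2 * t) \<or> v = interleave xs zs ! (2 * t + 1)"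
      by (auto simp: nth_interleave)
    moreover have "2 * t < 2 * length xs" "2 * t + 1 < 2 * length xs" using t(1) by auto
    ultimately show "v \<in> set (interleave xs zs)" by (metis length_interleave nth_mem)
  qed
qed

lemma distinct_interleave:
  assumes "length zs = length xs" "distinct xs" "distinct zs" "set xs \<inter> set zs = {}"
  shows "distinct (interleave xs zs)"
proof (rule card_distinct)
  have "card (set xs \<union> set zs) = length xs + length zs"
    using assms by (simp add: card_Un_disjoint distinct_card)
  then show "card (set (interleave xs zs)) = length (interleave xs zs)"
    using assms(1) by (simp add: set_interleave)
qed

lemma alt_cycle_has_cycle_of_length:
  assumes c: "alt_cycle (neighbours E) xs zs" "distinct xs" "distinct zs"
    and "set xs \<inter> set zs = {}" "set xs \<union> set zs \<subseteq> V"
  shows "has_cycle_of_length V E (2 * length xs)"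
proof -
  let ?k = "length xs" and ?vs = "interleave xs zs"
  have l: "length zs = ?k" "2 \<le> ?k" using c(1) by (auto simp: alt_cycle_def)
  have edge: "{xs ! t, zs ! t} \<in> E" "{zs ! t, xs ! (Suc t mod ?k)} \<in> E" if "t < ?k" for t
    using c(1) that by (auto simp: alt_cycle_def neighbours_def insert_commute)
  have "{?vs ! i, ?vs ! ((i + 1) mod (2 * ?k))} \<in> E" if i: "i < 2 * ?k" for i
  proof (cases "even i")
    case True
    then obtain t where "i = 2 * t" "t < ?k" "i + 1 < 2 * ?k" using i by (auto elim!: evenE)
    then show ?thesis using edge(1) by (simp add: nth_interleave)
  next
    case False
    then obtain t where t: "i = 2 * t + 1" "t < ?k" using i by (auto elim!: oddE)
    then have "(i + 1) mod (2 * ?k) = 2 * (Suc t mod ?k)" by (simp add: mult_mod_right)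
    moreover have "Suc t mod ?k < ?k" using l by (intro mod_less_divisor) linarith
    ultimately show ?thesis using edge(2) t by (simp add: nth_interleave)
  qed
  then show ?thesis
    unfolding has_cycle_of_length_def using assms l
    by (intro conjI exI[of _ ?vs]) (auto simp: set_interleave distinct_interleave)
qed

lemma spanning_cycle_has_cycle_of_length:
  assumes G: "bipartite_graph X Y E" and "neighbourhood_system.spanning_cycle (neighbours E) Y X"
  shows "has_cycle_of_length (X \<union> Y) E (2 * card X)"
proof -
  obtain xs zs where c: "alt_cycle (neighbours E) xs zs" "distinct xs" "set xs = X" "distinct zs"
    "set zs \<subseteq> Y"
    using assms(2) unfolding neighbourhood_system.spanning_cycle_def by blast
  have "set xs \<inter> set zs = {}" "set xs \<union> set zs \<subseteq> X \<union> Y"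
    using c(3,5) G by (auto simp: bipartite_graph_def)
  then have "has_cycle_of_length (X \<union> Y) E (2 * length xs)"
    using c by (intro alt_cycle_has_cycle_of_length) simp_all
  then show ?thesis using c(2,3) distinct_card by metis
qed

lemma graph_iso_bipartiteI:
  assumes G: "bipartite_graph X Y E" and G': "bipartite_graph X' Y' E'"
    and f: "bij_betw f (X \<union> Y) (X' \<union> Y')" "f ` X \<subseteq> X'" "f ` Y \<subseteq> Y'"
    and edges: "\<And>x y. x \<in> X \<Longrightarrow> y \<in> Y \<Longrightarrow> {x, y} \<in> E \<longleftrightarrow> {f x, f y} \<in> E'"
  shows "graph_iso (X \<union> Y) E (X' \<union> Y') E'"
  unfolding graph_iso_def
proof (intro exI[of _ f] conjI ballI f(1))
  have disj: "X \<inter> Y = {}" "X' \<inter> Y' = {}" using G G' by (simp_all add: bipartite_graph_def)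
  fix u v assume "u \<in> X \<union> Y" "v \<in> X \<union> Y"
  then consider "u \<in> X" "v \<in> Y" | "u \<in> Y" "v \<in> X" | "u \<in> X" "v \<in> X" | "u \<in> Y" "v \<in> Y"
    by blast
  then show "{u, v} \<in> E \<longleftrightarrow> {f u, f v} \<in> E'"
  proof cases
    case 2
    then show ?thesis using edges[of v u] by (simp add: insert_commute)
  next
    case 3
    then show ?thesis
      using bipartite_edgeD[OF G, of u v] bipartite_edgeD[OF G', of "f u" "f v"] f(2) disj by blast
  next
    case 4
    then show ?thesis
      using bipartite_edgeD[OF G, of u v] bipartite_edgeD[OF G', of "f u" "f v"] f(3) disj by blast
  qed (rule edges)
qed

lemma bij_betw_Pair: "bij_betw g A I \<Longrightarrow> bij_betw (\<lambda>v. (c, g v)) A (Pair c ` I)"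
  unfolding bij_betw_def inj_on_def by auto

lemma bij_betw_if:
  assumes "bij_betw f S T" "bij_betw g S' T'" "S \<inter> S' = {}" "T \<inter> T' = {}"
  shows "bij_betw (\<lambda>v. if v \<in> S then f v else g v) (S \<union> S') (T \<union> T')"
proof (rule bij_betw_combine[OF _ _ assms(4)])
  show "bij_betw (\<lambda>v. if v \<in> S then f v else g v) S T"
    by (rule bij_betw_cong[THEN iffD2, OF _ assms(1)]) simp
  show "bij_betw (\<lambda>v. if v \<in> S then f v else g v) S' T'"
    by (rule bij_betw_cong[THEN iffD2, OF _ assms(2)]) (use assms(3) in auto)
qed

lemma bipartite_G1: "bipartite_graph (G1_X d) (G1_Y d) (G1_E d)"
proof -
  have "G1_X d = Pair 0 ` {..<d}" "G1_Y d = Pair 1 ` {..<d - 1} \<union> Pair 2 ` {..<d}"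
    by (auto simp: G1_X_def G1_Y_def)
  then show ?thesis unfolding bipartite_graph_def G1_E_def by (auto simp: G1_X_def G1_Y_def)
qed

lemma bipartite_G2:
  assumes "0 < d" shows "bipartite_graph (G2_X a b) (G2_Y d) (G2_E a b d)"
  unfolding bipartite_graph_def
proof (intro conjI ballI)
  have "G2_X a b = Pair 0 ` {..<a} \<union> Pair 2 ` {..<b}"
    "G2_Y d = Pair 1 ` {..<d} \<union> Pair 3 ` {1..<d}"
    by (auto simp: G2_X_def G2_Y_def)
  then show "finite (G2_X a b)" "finite (G2_Y d)" by simp_all
  show "G2_X a b \<inter> G2_Y d = {}" by (auto simp: G2_X_def G2_Y_def)
  fix e assume "e \<in> G2_E a b d"
  moreover have "(1, 0) \<in> G2_Y d" using assms by (simp add: G2_Y_def)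
  ultimately show "\<exists>x\<in>G2_X a b. \<exists>y\<in>G2_Y d. e = {x, y}"
    unfolding G2_E_def G2_X_def G2_Y_def by blast
qed

lemma G2_E_iff:
  fixes i j :: nat
  shows "{(0, i), (1, j)} \<in> G2_E a b d \<longleftrightarrow> i < a \<and> j < d"
    and "{(0, i), (3, j)} \<notin> G2_E a b d"
    and "{(2, i), (1, j)} \<in> G2_E a b d \<longleftrightarrow> i < b \<and> j = 0"
    and "{(2, i), (3, j)} \<in> G2_E a b d \<longleftrightarrow> i < b \<and> 1 \<le> j \<and> j < d"
  by (auto simp: G2_E_def doubleton_eq_iff)

lemma obtain_G2_labelling:
  assumes fin: "finite A" "finite B" "finite P" "finite Q"
    and card: "card P = d - 1" "card Q = d - 1" and d: "0 < d"
    and disj: "A \<inter> B = {}" "(A \<union> B) \<inter> insert y\<^sub>0 (P \<union> Q) = {}" "y\<^sub>0 \<notin> P" "y\<^sub>0 \<notin> Q" "P \<inter> Q = {}"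
  obtains c i where
    "bij_betw (\<lambda>v. (c v, i v)) (A \<union> B \<union> insert y\<^sub>0 (P \<union> Q)) (G2_X (card A) (card B) \<union> G2_Y d)"
    and "\<And>v. v \<in> A \<Longrightarrow> c v = 0 \<and> i v < card A" "\<And>v. v \<in> B \<Longrightarrow> c v = 2 \<and> i v < card B"
    and "c y\<^sub>0 = 1" "i y\<^sub>0 = 0"
    and "\<And>v. v \<in> P \<Longrightarrow> c v = 1 \<and> 0 < i v \<and> i v < d" "\<And>v. v \<in> Q \<Longrightarrow> c v = 3 \<and> 0 < i v \<and> i v < d"
proof -
  obtain gA gB gP gQ where gA: "bij_betw gA A {..<card A}" and gB: "bij_betw gB B {..<card B}"
    and gP: "bij_betw gP P {1..<d}" and gQ: "bij_betw gQ Q {1..<d}"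
    using fin card finite_same_card_bij[of A "{..<card A}"] finite_same_card_bij[of B "{..<card B}"]
      finite_same_card_bij[of P "{1..<d}"] finite_same_card_bij[of Q "{1..<d}"] by auto
  define f where "f v = (if v \<in> A then (0::nat, gA v) else if v \<in> B then (2, gB v)
    else if v \<in> {y\<^sub>0} then (1, 0) else if v \<in> P then (1, gP v) else (3, gQ v))" for v
  have "bij_betw f (A \<union> (B \<union> ({y\<^sub>0} \<union> (P \<union> Q))))
    (Pair 0 ` {..<card A} \<union> (Pair 2 ` {..<card B} \<union> ({(1, 0)} \<union> (Pair 1 ` {1..<d} \<union> Pair 3 ` {1..<d}))))"
    unfolding f_def[abs_def] using disj
    by (intro bij_betw_if bij_betw_Pair gA gB gP gQ bij_betw_singletonI) auto
  moreover have "G2_X (card A) (card B) \<union> G2_Y d =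
      Pair 0 ` {..<card A} \<union> (Pair 2 ` {..<card B} \<union> ({(1, 0)} \<union> (Pair 1 ` {1..<d} \<union> Pair 3 ` {1..<d})))"
    using d by (auto simp: G2_X_def G2_Y_def image_iff)
  moreover have "A \<union> (B \<union> ({y\<^sub>0} \<union> (P \<union> Q))) = A \<union> B \<union> insert y\<^sub>0 (P \<union> Q)" by auto
  ultimately have "bij_betw (\<lambda>v. (fst (f v), snd (f v))) (A \<union> B \<union> insert y\<^sub>0 (P \<union> Q))
      (G2_X (card A) (card B) \<union> G2_Y d)"
    by simp
  moreover have "fst (f v) = 0 \<and> snd (f v) < card A" if "v \<in> A" for v
    using that bij_betw_apply[OF gA that] by (simp add: f_def)
  moreover have "fst (f v) = 2 \<and> snd (f v) < card B" if "v \<in> B" for v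
    using that bij_betw_apply[OF gB that] disj(1) by (auto simp: f_def)
  moreover have "fst (f y\<^sub>0) = 1" "snd (f y\<^sub>0) = 0" using disj(2) by (auto simp: f_def)
  moreover have "fst (f v) = 1 \<and> 0 < snd (f v) \<and> snd (f v) < d" if "v \<in> P" for v
    using that bij_betw_apply[OF gP that] disj by (auto simp: f_def)
  moreover have "fst (f v) = 3 \<and> 0 < snd (f v) \<and> snd (f v) < d" if "v \<in> Q" for v
    using that bij_betw_apply[OF gQ that] disj by (auto simp: f_def)
  ultimately show thesis by (rule that)
qed

lemma graph_iso_G2:
  assumes G: "bipartite_graph X Y E" "0 < d"
    and AB: "X = A \<union> B" "A \<inter> B = {}"
    and PQ: "Y = insert y\<^sub>0 (P \<union> Q)" "y\<^sub>0 \<notin> P" "y\<^sub>0 \<notin> Q" "P \<inter> Q = {}"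
      "card P = d - 1" "card Q = d - 1"
    and NA: "\<forall>a\<in>A. neighbours E a = insert y\<^sub>0 P" and NB: "\<forall>b\<in>B. neighbours E b = insert y\<^sub>0 Q"
  shows "graph_iso (X \<union> Y) E (G2_X (card A) (card B) \<union> G2_Y d) (G2_E (card A) (card B) d)"
proof -
  have "finite A" "finite B" "finite P" "finite Q" "X \<inter> Y = {}"
    using G(1) AB(1) PQ(1) by (auto simp: bipartite_graph_def)
  then obtain c i
    where bij: "bij_betw (\<lambda>v. (c v, i v)) (X \<union> Y) (G2_X (card A) (card B) \<union> G2_Y d)"
    and A: "\<And>v. v \<in> A \<Longrightarrow> c v = 0 \<and> i v < card A" and B: "\<And>v. v \<in> B \<Longrightarrow> c v = 2 \<and> i v < card B"
    and y\<^sub>0: "c y\<^sub>0 = 1" "i y\<^sub>0 = 0"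
    and P: "\<And>v. v \<in> P \<Longrightarrow> c v = 1 \<and> 0 < i v \<and> i v < d"
    and Q: "\<And>v. v \<in> Q \<Longrightarrow> c v = 3 \<and> 0 < i v \<and> i v < d"
    using obtain_G2_labelling[of A B P Q d y\<^sub>0] AB PQ G(2) by auto
  have "(\<lambda>v. (c v, i v)) ` X \<subseteq> G2_X (card A) (card B)"
    using AB(1) A B by (auto simp: G2_X_def)
  moreover have "(\<lambda>v. (c v, i v)) ` Y \<subseteq> G2_Y d"
    using PQ(1) y\<^sub>0 P Q G(2) by (fastforce simp: G2_Y_def)
  moreover have "{v, y} \<in> E \<longleftrightarrow> {(c v, i v), (c y, i y)} \<in> G2_E (card A) (card B) d"
    if v: "v \<in> X" and y: "y \<in> Y" for v y
  proof -
    note G2_E_iff_Suc = G2_E_iff G2_E_iff[unfolded One_nat_def]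
    have E_iff: "{v, y} \<in> E \<longleftrightarrow> y \<in> neighbours E v" by (simp add: neighbours_def)
    consider "v \<in> A" | "v \<in> B" "v \<notin> A" using v AB(1) by blast
    then show ?thesis
    proof cases
      case 1
      consider "y = y\<^sub>0" | "y \<in> P" | "y \<in> Q" "y \<notin> insert y\<^sub>0 P" using y PQ by blast
      then show ?thesis using E_iff NA 1 A[OF 1] y\<^sub>0 P Q G(2) by cases (simp_all add: G2_E_iff_Suc)
    next
      case 2
      consider "y = y\<^sub>0" | "y \<in> Q" | "y \<in> P" "y \<notin> insert y\<^sub>0 Q" using y PQ by blast
      then show ?thesis
        using E_iff NB 2 B[OF 2(1)] y\<^sub>0 P Q G(2) by cases (simp_all add: G2_E_iff_Suc Suc_le_eq)
    qed
  qed
  ultimately show ?thesis by (rule graph_iso_bipartiteI[OF G(1) bipartite_G2[OF G(2)] bij])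
qed

lemma G1_E_iff:
  fixes i j :: nat
  shows "{(0, i), (1, j)} \<in> G1_E d \<longleftrightarrow> i < d \<and> j < d - 1"
    and "{(0, i), (2, j)} \<in> G1_E d \<longleftrightarrow> i = j \<and> i < d"
  by (auto simp: G1_E_def doubleton_eq_iff)

lemma obtain_private_neighbours:
  assumes own: "\<forall>v\<in>X. card (N v - Y\<^sub>0) = 1"
    and disj: "\<forall>v\<in>X. \<forall>w\<in>X. v \<noteq> w \<longrightarrow> (N v - Y\<^sub>0) \<inter> (N w - Y\<^sub>0) = {}"
    and cover: "Y - Y\<^sub>0 = (\<Union>v\<in>X. N v) - Y\<^sub>0"
  obtains p where "bij_betw p X (Y - Y\<^sub>0)" "\<And>v. v \<in> X \<Longrightarrow> N v - Y\<^sub>0 = {p v}"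
proof -
  define p where "p v = the_elem (N v - Y\<^sub>0)" for v
  have p: "N v - Y\<^sub>0 = {p v}" if v: "v \<in> X" for v
  proof -
    obtain u where "N v - Y\<^sub>0 = {u}" using own v by (auto simp: card_1_singleton_iff)
    then show ?thesis by (simp add: p_def)
  qed
  have "inj_on p X"
    using p disj by (intro inj_onI) (metis Int_insert_left_if1 insert_not_empty singletonI)
  moreover have "p ` X = Y - Y\<^sub>0" using p cover by blast
  ultimately show thesis using that p by (simp add: bij_betw_def)
qed

lemma obtain_G1_labelling:
  assumes X: "finite X" "card X = d" and Y\<^sub>0: "finite Y\<^sub>0" "card Y\<^sub>0 = d - 1"
    and p: "bij_betw p X R" and disj: "X \<inter> (Y\<^sub>0 \<union> R) = {}" "Y\<^sub>0 \<inter> R = {}"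
  obtains f g where "bij_betw f (X \<union> Y\<^sub>0 \<union> R) (G1_X d \<union> G1_Y d)" "inj_on g X"
    and "\<And>v. v \<in> X \<Longrightarrow> f v = (0, g v) \<and> g v < d" "\<And>v. v \<in> X \<Longrightarrow> f (p v) = (2, g v)"
    and "f ` Y\<^sub>0 \<subseteq> {(1, j) | j. j < d - 1}"
proof -
  obtain g h where g: "bij_betw g X {..<d}" and h: "bij_betw h Y\<^sub>0 {..<d - 1}"
    using X Y\<^sub>0 finite_same_card_bij[of X "{..<d}"] finite_same_card_bij[of Y\<^sub>0 "{..<d - 1}"] by auto
  define q where "q = inv_into X p"
  have gq: "bij_betw (g \<circ> q) R {..<d}"
    unfolding q_def by (rule bij_betw_trans[OF bij_betw_inv_into[OF p] g])
  define f where "f v = (if v \<in> X then (0::nat, g v) else if v \<in> Y\<^sub>0 then (1, h v)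
    else (2, (g \<circ> q) v))" for v
  have "bij_betw f (X \<union> (Y\<^sub>0 \<union> R)) (Pair 0 ` {..<d} \<union> (Pair 1 ` {..<d - 1} \<union> Pair 2 ` {..<d}))"
    unfolding f_def[abs_def] using disj by (intro bij_betw_if bij_betw_Pair g h gq) auto
  moreover have "G1_X d \<union> G1_Y d = Pair 0 ` {..<d} \<union> (Pair 1 ` {..<d - 1} \<union> Pair 2 ` {..<d})"
    by (auto simp: G1_X_def G1_Y_def)
  moreover have "inj_on g X" using g by (rule bij_betw_imp_inj_on)
  moreover have "f v = (0, g v) \<and> g v < d" if "v \<in> X" for v
    using that bij_betw_apply[OF g that] by (simp add: f_def)
  moreover have "f (p v) = (2, g v)" if "v \<in> X" for v
    using that bij_betw_apply[OF p that] disj bij_betw_inv_into_left[OF p that] by (auto simp: f_def q_def)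
  moreover have "f ` Y\<^sub>0 \<subseteq> {(1, j) | j. j < d - 1}"
    using bij_betw_apply[OF h] disj by (auto simp: f_def)
  ultimately show thesis using that by (simp add: Un_assoc)
qed

lemma graph_iso_G1:
  assumes G: "bipartite_graph X Y E" and card_X: "card X = d"
    and "neighbourhood_system.G1_structure (neighbours E) Y d X"
  shows "graph_iso (X \<union> Y) E (G1_X d \<union> G1_Y d) (G1_E d)"
proof -
  obtain Y\<^sub>0 where Y\<^sub>0: "Y\<^sub>0 \<subseteq> Y" "card Y\<^sub>0 = d - 1"
    and own: "\<forall>v\<in>X. Y\<^sub>0 \<subseteq> neighbours E v \<and> card (neighbours E v - Y\<^sub>0) = 1"
    and disj: "\<forall>v\<in>X. \<forall>w\<in>X. v \<noteq> w \<longrightarrow> (neighbours E v - Y\<^sub>0) \<inter> (neighbours E w - Y\<^sub>0) = {}"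
    and cover: "Y = Y\<^sub>0 \<union> (\<Union>v\<in>X. neighbours E v)"
    using assms(3) unfolding neighbourhood_system.G1_structure_def by blast
  have fin: "finite X" "finite Y\<^sub>0" "X \<inter> Y = {}"
    using G Y\<^sub>0(1) by (auto simp: bipartite_graph_def intro: finite_subset)
  obtain p where p: "bij_betw p X (Y - Y\<^sub>0)" "\<And>v. v \<in> X \<Longrightarrow> neighbours E v - Y\<^sub>0 = {p v}"
    using obtain_private_neighbours[of X "neighbours E" Y\<^sub>0 Y] own disj cover by blast
  obtain f g where bij: "bij_betw f (X \<union> Y\<^sub>0 \<union> (Y - Y\<^sub>0)) (G1_X d \<union> G1_Y d)" and "inj_on g X"
    and fX: "\<And>v. v \<in> X \<Longrightarrow> f v = (0, g v) \<and> g v < d" and fp: "\<And>v. v \<in> X \<Longrightarrow> f (p v) = (2, g v)"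
    and fY\<^sub>0: "f ` Y\<^sub>0 \<subseteq> {(1, j) | j. j < d - 1}"
    using obtain_G1_labelling[OF fin(1) card_X fin(2) Y\<^sub>0(2) p(1)] fin(3) Y\<^sub>0(1) by blast
  have XY: "X \<union> Y\<^sub>0 \<union> (Y - Y\<^sub>0) = X \<union> Y" using Y\<^sub>0(1) by auto
  have R: "Y - Y\<^sub>0 = p ` X" using p(1) by (simp add: bij_betw_def)
  have "f ` X \<subseteq> G1_X d" using fX by (auto simp: G1_X_def)
  moreover have "f ` Y \<subseteq> G1_Y d"
  proof (rule image_subsetI)
    fix y assume y: "y \<in> Y"
    show "f y \<in> G1_Y d"
    proof (cases "y \<in> Y\<^sub>0")
      case False
      then obtain w where "w \<in> X" "y = p w" using y R by blast
      then show ?thesis using fp fX by (auto simp: G1_Y_def)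
    qed (use fY\<^sub>0 in \<open>auto simp: G1_Y_def\<close>)
  qed
  moreover have "{v, y} \<in> E \<longleftrightarrow> {f v, f y} \<in> G1_E d" if v: "v \<in> X" and y: "y \<in> Y" for v y
  proof (cases "y \<in> Y\<^sub>0")
    case True
    then show ?thesis
      using own v fX[OF v] fY\<^sub>0 by (auto simp: neighbours_def G1_E_iff[unfolded One_nat_def])
  next
    case False
    then obtain w where w: "w \<in> X" "y = p w" using y R by blast
    have "y \<in> neighbours E v \<longleftrightarrow> p w = p v" using p(2)[OF v] False w(2) by blast
    also have "\<dots> \<longleftrightarrow> g w = g v"
      using p(1) \<open>inj_on g X\<close> v w(1) by (metis bij_betw_imp_inj_on inj_on_eq_iff)
    finally show ?thesis using fX[OF v] fX[OF w(1)] fp[OF w(1)] w(2) by (auto simp: neighbours_def G1_E_iff)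
  qed
  ultimately show ?thesis by (rule graph_iso_bipartiteI[OF G bipartite_G1 bij[unfolded XY]])
qed

lemma G2_structure_graph_iso:
  assumes G: "bipartite_graph X Y E" "0 < d"
    and "neighbourhood_system.G2_structure (neighbours E) Y d X"
  shows "\<exists>a b. 0 < b \<and> b \<le> a \<and> a + b = card X \<and>
    graph_iso (X \<union> Y) E (G2_X a b \<union> G2_Y d) (G2_E a b d)"
proof -
  obtain A B y\<^sub>0 P Q where AB: "X = A \<union> B" "A \<inter> B = {}" "A \<noteq> {}" "B \<noteq> {}"
    and PQ: "Y = insert y\<^sub>0 (P \<union> Q)" "y\<^sub>0 \<notin> P" "y\<^sub>0 \<notin> Q" "P \<inter> Q = {}"
      "card P = d - 1" "card Q = d - 1"
    and NA: "\<forall>a\<in>A. neighbours E a = insert y\<^sub>0 P" and NB: "\<forall>b\<in>B. neighbours E b = insert y\<^sub>0 Q"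
    using assms(3) unfolding neighbourhood_system.G2_structure_def by blast
  have "finite A" "finite B" using G(1) AB(1) by (auto simp: bipartite_graph_def)
  then have cards: "card A + card B = card X" "0 < card A" "0 < card B"
    using AB by (auto simp: card_Un_disjoint card_gt_0_iff)
  show ?thesis
  proof (cases "card B \<le> card A")
    case True
    then show ?thesis using graph_iso_G2[OF G AB(1,2) PQ NA NB] cards by blast
  next
    case False
    have "X = B \<union> A" "B \<inter> A = {}" "Y = insert y\<^sub>0 (Q \<union> P)" "Q \<inter> P = {}" using AB PQ by auto
    with False show ?thesis
      using graph_iso_G2[OF G _ _ _ PQ(3,2) _ PQ(6,5) NB NA] cards
      by (intro exI[of _ "card B"] exI[of _ "card A"]) auto
  qed
qed

theorem theorem3:
  fixes X Y :: "'a set" and E :: "'a set set" and n m \<delta> :: nat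
  assumes "n \<ge> 2" and "\<delta> \<ge> n" and "m \<le> 2 * \<delta> - 1"
    and "bipartite_graph X Y E" and "card X = n" and "card Y = m"
    and "\<forall>x\<in>X. degree E x \<ge> \<delta>"
    and "\<not> has_cycle_of_length (X \<union> Y) E (2 * n)"
  shows "(\<delta> = n \<and> graph_iso (X \<union> Y) E (G1_X \<delta> \<union> G1_Y \<delta>) (G1_E \<delta>))
       \<or> (\<exists>a b. 0 < b \<and> b \<le> a \<and> a + b = n \<and>
            graph_iso (X \<union> Y) E (G2_X a b \<union> G2_Y \<delta>) (G2_E a b \<delta>))"
proof -
  have fin: "finite X" "finite Y" using assms(4) by (simp_all add: bipartite_graph_def)
  interpret dense_bipartite "neighbours E" Y \<delta>
    using fin(2) assms(1-3,6) by unfold_locales arith+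
  have "\<forall>v\<in>X. neighbours E v \<subseteq> Y \<and> \<delta> \<le> card (neighbours E v)"
    using bipartite_neighbours_subset[OF assms(4)] assms(7) by (simp add: degree_def neighbours_def)
  then have "spanning_cycle X \<or> G2_structure X \<or> (\<delta> = n \<and> G1_structure X)"
    using spanning_cycle_or_structure fin(1) assms(1,2,5) by auto
  moreover have "\<not> spanning_cycle X"
    using spanning_cycle_has_cycle_of_length[OF assms(4)] assms(5,8) by auto
  ultimately show ?thesis
    using G2_structure_graph_iso[OF assms(4)] graph_iso_G1[OF assms(4)] assms(1,2,5) by auto
qed

end
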